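(* For $t\in(0,1)$ and $c\in\mathbb{R}$ define the $2\times2$ matrix $T_1(c,t)$ with entries $(T_1)_{11}=12c-\frac38\sqrt2$, $(T_1)_{12}=12c-\frac{3(t+3)}{(3t^2+2t+3)^{3/2}}-\frac{\sqrt3}{3(t-1)^2}$, $(T_1)_{21}=12ct-\frac{3(3t+1)}{(3t^2+2t+3)^{3/2}}+\frac{\sqrt3t-\sqrt3}{3(t-1)^3}$, $(T_1)_{22}=12ct-\frac{3\sqrt2}{8t^2}$, so that $\det T_1=\alpha_1(t)c+\alpha_0(t)$ with $$\alpha_1(t)=-\frac12\left(9\sqrt2\,t-\frac{72(t^2+6t+1)}{(3t^2+2t+3)^{3/2}}-\frac{8\sqrt3}{t-1}+\frac{9\sqrt2}{t^2}\right),$$ $$\alpha_0(t)=-\frac{9(3t+1)(t+3)}{(3t^2+2t+3)^3}-\frac{2\sqrt3}{(3t^2+2t+3)^{3/2}(t-1)}+\frac{9}{32t^2}+\frac{1}{3(t-1)^4}.$$ Then: (i) $\alpha_1(t)<0$ for $t\in(0,1)$; (ii) $\alpha_0(t)>0$ for $t\in(0,1)$; (iii) $c(t):=-\alpha_0(t)/\alpha_1(t)>0$ for $t\in(0,1)$; (iv) $(T_1)_{11}(c(t),t)>0$ for $t\in(0,1)$; (v) there exists $\delta<1$ such that $(T_1)_{12}(c(t),t)<0$ for $t\in(0,\delta)$ and $(T_1)_{12}(c(t),t)>0$ for $t\in(\delta,1)$. *)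

theory Defs
  imports "HOL-Analysis.Analysis"
begin

definition q :: "real \<Rightarrow> real" where
  "q t = 3*t^2 + 2*t + 3"

definition T1_11 :: "real \<Rightarrow> real \<Rightarrow> real" where
  "T1_11 c t = 12*c - 3/8 * sqrt 2"
definition T1_12 :: "real \<Rightarrow> real \<Rightarrow> real" where
  "T1_12 c t = 12*c - 3*(t+3) / (q t powr (3/2)) - sqrt 3 / (3*(t-1)^2)"
definition T1_21 :: "real \<Rightarrow> real \<Rightarrow> real" where
  "T1_21 c t = 12*c*t - 3*(3*t+1) / (q t powr (3/2)) + (sqrt 3 * t - sqrt 3) / (3*(t-1)^3)"
definition T1_22 :: "real \<Rightarrow> real \<Rightarrow> real" where
  "T1_22 c t = 12*c*t - 3 * sqrt 2 / (8*t^2)"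

definition T1 :: "real \<Rightarrow> real \<Rightarrow> real^2^2" where
  "T1 c t = (\<chi> i j. if i = 1 then (if j = 1 then T1_11 c t else T1_12 c t)
                     else (if j = 1 then T1_21 c t else T1_22 c t))"

definition alpha1 :: "real \<Rightarrow> real" where
  "alpha1 t = -(1/2) * (9 * sqrt 2 * t - 72*(t^2+6*t+1) / (q t powr (3/2))
                         - 8 * sqrt 3 / (t-1) + 9 * sqrt 2 / t^2)"

definition alpha0 :: "real \<Rightarrow> real" where
  "alpha0 t = - 9*(3*t+1)*(t+3) / (q t)^3
              - 2 * sqrt 3 / (q t powr (3/2) * (t-1))
              + 9 / (32*t^2) + 1 / (3*(t-1)^4)"

definition cfun :: "real \<Rightarrow> real" where
  "cfun t = - alpha0 t / alpha1 t"

end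

theory Submission
  imports Defs
begin

(* With c = cfun t the entries become T1_11 = 12 numer11 / (-alpha1) and T1_12 = numer12 / (-alpha1),
   where numer11 = alpha0 + sqrt 2/32 alpha1 and
   numer12 = 12 alpha0 + (3(t+3)/q^(3/2) + sqrt 3/(3(t-1)^2)) alpha1, so all claims reduce to the
   signs of alpha1, alpha0, numer11 and numer12 on (0,1).

   Writing q^(3/2) = sqrt(q)^3, each of these is a sum of terms that are monotone in t and in
   sqrt(q t) separately.  On a subinterval [a,b], rational bounds for sqrt 2, sqrt 3, sqrt 6,
   sqrt(q a) and sqrt(q b), with every term evaluated at its unfavourable end, give a rational
   certificate, and a few subintervals cover (0,1).  The exception is numer11 near 0, where the
   1/t^2 poles of alpha0 and alpha1 cancel; there polynomial estimates for 1/sqrt(q)^3 and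
   1/sqrt(q)^6 reduce positivity to that of a polynomial on (0,1/5].

   numer12 is negative on (0,1/2] and positive on [11/20,1).  In between, its part rational in t
   has positive derivative and the rest is increasing, so delta is the unique zero of numer12. *)

definition sqrt_q :: "real \<Rightarrow> real" where
  "sqrt_q t = sqrt (q t)"

lemma q_pos: "0 < q t"
proof -
  have "q t = 3 * (t + 1/3)^2 + 8/3"
    unfolding q_def by (simp add: power2_eq_square algebra_simps)
  then show ?thesis
    using zero_le_power2[of "t + 1/3"] by linarith
qed

lemma q_mono:
  assumes "0 \<le> s" "s \<le> t"
  shows "q s \<le> q t"
  using power_mono[OF assms(2,1), of 2] assms unfolding q_def by linarith

lemma q_nonzero: "q t \<noteq> 0"
  using q_pos[of t] by simp

lemma q_has_derivative: "(q has_real_derivative 6 * x + 2) (at x)"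
  unfolding q_def[abs_def] by (auto intro!: derivative_eq_intros)

lemma sqrt_q_pos: "0 < sqrt_q t"
  by (simp add: sqrt_q_def q_pos)

lemma sqrt_q_mono: "0 \<le> s \<Longrightarrow> s \<le> t \<Longrightarrow> sqrt_q s \<le> sqrt_q t"
  unfolding sqrt_q_def by (intro real_sqrt_le_mono q_mono)

lemma sqrt_q_ge: "0 \<le> l \<Longrightarrow> l^2 \<le> q a \<Longrightarrow> 0 \<le> a \<Longrightarrow> a \<le> t \<Longrightarrow> l \<le> sqrt_q t"
  unfolding sqrt_q_def by (rule real_le_rsqrt) (meson order_trans q_mono)

lemma sqrt_q_le: "0 \<le> h \<Longrightarrow> q b \<le> h^2 \<Longrightarrow> 0 \<le> t \<Longrightarrow> t \<le> b \<Longrightarrow> sqrt_q t \<le> h"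
  unfolding sqrt_q_def by (rule real_le_lsqrt) (auto intro: order_trans q_mono)

lemma sqrt_q_square: "sqrt_q t ^ 2 = q t"
  using q_pos[of t] by (simp add: sqrt_q_def)

lemma q_powr_three_halves: "q t powr (3/2) = sqrt_q t ^ 3"
proof -
  have "q t powr (3/2) = q t powr (1 + 1/2)"
    by simp
  also have "\<dots> = q t powr 1 * q t powr (1/2)"
    by (rule powr_add)
  also have "\<dots> = sqrt_q t ^ 2 * sqrt_q t"
    using q_pos[of t] by (simp add: powr_half_sqrt sqrt_q_square sqrt_q_def)
  finally show ?thesis
    by (simp add: power2_eq_square power3_eq_cube)
qed

lemma q_cube: "q t ^ 3 = sqrt_q t ^ 6"
  by (simp flip: sqrt_q_square power_mult)

lemma sqrt2_ge: "1.414213 \<le> sqrt 2"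
  by (rule real_le_rsqrt) (simp add: power_divide)
lemma sqrt2_le: "sqrt 2 \<le> 1.414214"
  by (rule real_le_lsqrt) (simp_all add: power_divide)
lemma sqrt3_ge: "1.73205 \<le> sqrt 3"
  by (rule real_le_rsqrt) (simp add: power_divide)
lemma sqrt3_le: "sqrt 3 \<le> 1.732051"
  by (rule real_le_lsqrt) (simp_all add: power_divide)
lemma sqrt6_ge: "2.449489 \<le> sqrt 2 * sqrt 3"
  unfolding real_sqrt_mult[symmetric] by (rule real_le_rsqrt) (simp add: power_divide)
lemma sqrt6_le: "sqrt 2 * sqrt 3 \<le> 2.44949"
  unfolding real_sqrt_mult[symmetric] by (rule real_le_lsqrt) (simp_all add: power_divide)

lemma alpha1_eq:
  "alpha1 t = - (9/2 * sqrt 2 * t - 36 * (t^2 + 6*t + 1) / sqrt_q t ^ 3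
                 + 4 * sqrt 3 / (1 - t) + 9/2 * sqrt 2 / t^2)"
proof -
  have "8 * sqrt 3 / (t - 1) = - (8 * sqrt 3 / (1 - t))"
    by (metis minus_diff_eq minus_divide_right)
  then show ?thesis
    unfolding alpha1_def q_powr_three_halves by (simp add: field_simps)
qed

lemma alpha0_eq:
  "alpha0 t = - 9 * ((3*t + 1) * (t + 3)) / sqrt_q t ^ 6 + 2 * sqrt 3 / (sqrt_q t ^ 3 * (1 - t))
              + 9 / (32 * t^2) + 1 / (3 * (1 - t)^4)"
proof -
  have "2 * sqrt 3 / (sqrt_q t ^ 3 * (t - 1)) = - (2 * sqrt 3 / (sqrt_q t ^ 3 * (1 - t)))"
    by (metis minus_diff_eq minus_divide_right mult_minus_right)
  moreover have "(t - 1)^4 = (1 - t)^4"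
    by (simp add: power4_eq_xxxx algebra_simps)
  ultimately show ?thesis
    unfolding alpha0_def q_powr_three_halves q_cube by (simp add: field_simps)
qed

lemma det_T1:
  assumes "0 < t" "t < 1"
  shows "det (T1 c t) = alpha1 t * c + alpha0 t"
proof -
  \<comment> \<open>After rewriting divisions as products with inverses, \<open>algebra\<close> treats the inverses and
    square roots as atoms subject only to the relations listed here.\<close>
  have inv: "inverse (1-t) * (1-t) = 1" "inverse (t-1) * (t-1) = 1" "inverse t * t = 1"
    "sqrt 2 ^ 2 = 2" "sqrt 3 ^ 2 = 3"
    using assms by auto
  have "det (T1 c t) = T1_11 c t * T1_22 c t - T1_12 c t * T1_21 c t"
    unfolding det_2 by (simp add: T1_def)
  then show ?thesis
    unfolding alpha0_eq alpha1_eq T1_11_def T1_12_def T1_21_def T1_22_def q_powr_three_halves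
    apply (simp only: divide_inverse inverse_mult_distrib power_inverse[symmetric])
    using inv by algebra
qed

definition numer11 :: "real \<Rightarrow> real" where
  "numer11 t = alpha0 t + sqrt 2 / 32 * alpha1 t"

definition numer12 :: "real \<Rightarrow> real" where
  "numer12 t = 12 * alpha0 t + (3 * (t + 3) / q t powr (3/2) + sqrt 3 / (3 * (t - 1)^2)) * alpha1 t"

lemma T1_11_cfun: "alpha1 t \<noteq> 0 \<Longrightarrow> T1_11 (cfun t) t = 12 * numer11 t / - alpha1 t"
  unfolding T1_11_def cfun_def numer11_def by (simp add: field_simps)

lemma T1_12_cfun: "alpha1 t \<noteq> 0 \<Longrightarrow> T1_12 (cfun t) t = numer12 t / - alpha1 t"
  unfolding T1_12_def cfun_def numer12_def by (simp add: field_simps)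

lemma numer11_eq:
  assumes "0 < t" "t < 1"
  shows "numer11 t = - 9 * ((3*t + 1) * (t + 3)) / sqrt_q t ^ 6 + 2 * sqrt 3 / (sqrt_q t ^ 3 * (1 - t))
    + 1 / (3 * (1 - t)^4) - 9/32 * t + 9/8 * sqrt 2 * (t^2 + 6*t + 1) / sqrt_q t ^ 3
    - sqrt 2 * sqrt 3 / (8 * (1 - t))"
proof -
  have inv: "inverse (1-t) * (1-t) = 1" "inverse t * t = 1" "sqrt 2 ^ 2 = 2" "sqrt 3 ^ 2 = 3"
    using assms by auto
  show ?thesis
    unfolding numer11_def alpha0_eq alpha1_eq
    apply (simp only: divide_inverse inverse_mult_distrib power_inverse[symmetric])
    using inv by algebra
qed

definition numer12_rat :: "real \<Rightarrow> real" where
  "numer12_rat t = 4 * t / (1 - t)^4 - 3/2 * (sqrt 2 * sqrt 3) * (t / (1 - t)^2)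
     - 3/2 * (sqrt 2 * sqrt 3) / (t^2 * (1 - t)^2) + 27 / (8 * t^2) + 108 * (t * (t + 3)^2 / q t ^ 3)"

definition numer12_irr :: "real \<Rightarrow> real" where
  "numer12_irr t = - 27/2 * sqrt 2 * (t + 3) / (sqrt_q t ^ 3 * t^2)
     + 24 * sqrt 3 * (t * (t + 3)) / (sqrt_q t ^ 3 * (1 - t)^2)
     - 27/2 * sqrt 2 * (t * (t + 3)) / sqrt_q t ^ 3"

lemma numer12_split:
  assumes "0 < t" "t < 1"
  shows "numer12 t = numer12_rat t + numer12_irr t"
proof -
  have "(t - 1)^2 = (1 - t)^2"
    by (simp add: power2_commute)
  moreover have inv: "inverse (1-t) * (1-t) = 1" "inverse t * t = 1" "sqrt 2 ^ 2 = 2" "sqrt 3 ^ 2 = 3"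
    using assms by auto
  ultimately show ?thesis
    unfolding numer12_def numer12_rat_def numer12_irr_def alpha0_eq alpha1_eq q_powr_three_halves q_cube
    apply (simp only: divide_inverse inverse_mult_distrib power_inverse[symmetric])
    using inv by algebra
qed

section \<open>Interval enclosures\<close>

lemma alpha1_neg_on_interval:
  assumes t: "0 \<le> a" "a \<le> t" "t \<le> b" "0 < t" "t < 1"
    and l: "0 < l" "l^2 \<le> q a"
    and cert: "0 < 9/2 * 1.414213 * a - 36 * (b^2 + 6*b + 1) / l^3 + 4 * 1.73205 / (1 - a)
                   + 9/2 * 1.414213 / b^2"
  shows "alpha1 t < 0"
proof -
  have lt: "l \<le> sqrt_q t"
    using sqrt_q_ge t l by auto
  have tb: "t^2 \<le> b^2"
    using t by (intro power_mono) auto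
  have 1: "9/2 * 1.414213 * a \<le> 9/2 * sqrt 2 * t"
    using sqrt2_ge t by (intro mult_mono) auto
  have "t^2 + 6*t + 1 \<le> b^2 + 6*b + 1"
    using t tb by linarith
  then have 2: "36 * (t^2 + 6*t + 1) / sqrt_q t ^ 3 \<le> 36 * (b^2 + 6*b + 1) / l^3"
    using t l lt by (intro frac_le power_mono) auto
  have 3: "4 * 1.73205 / (1 - a) \<le> 4 * sqrt 3 / (1 - t)"
    using t sqrt3_ge by (intro frac_le) auto
  have 4: "9/2 * 1.414213 / b^2 \<le> 9/2 * sqrt 2 / t^2"
    using t tb sqrt2_ge by (intro frac_le) auto
  show ?thesis
    using 1 2 3 4 cert unfolding alpha1_eq by linarith
qed

lemma alpha0_pos_on_interval:
  assumes t: "0 \<le> a" "a \<le> t" "t \<le> b" "0 < t" "t < 1"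
    and l: "0 < l" "l^2 \<le> q a" and h: "0 < h" "q b \<le> h^2"
    and cert: "0 < - 9 * ((3*b + 1) * (b + 3)) / l^6 + 2 * 1.73205 / (h^3 * (1 - a))
                   + 9 / (32 * b^2) + 1 / (3 * (1 - a)^4)"
  shows "0 < alpha0 t"
proof -
  have lt: "l \<le> sqrt_q t" and ht: "sqrt_q t \<le> h"
    using sqrt_q_ge sqrt_q_le t l h by auto
  have "(3*t + 1) * (t + 3) \<le> (3*b + 1) * (b + 3)"
    using t by (intro mult_mono) auto
  then have 1: "9 * ((3*t + 1) * (t + 3)) / sqrt_q t ^ 6 \<le> 9 * ((3*b + 1) * (b + 3)) / l^6"
    using t l lt by (intro frac_le power_mono) auto
  have "sqrt_q t ^ 3 * (1 - t) \<le> h^3 * (1 - a)"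
    using t ht sqrt_q_pos[of t] by (intro mult_mono power_mono) auto
  then have 2: "2 * 1.73205 / (h^3 * (1 - a)) \<le> 2 * sqrt 3 / (sqrt_q t ^ 3 * (1 - t))"
    using t sqrt3_ge sqrt_q_pos[of t] by (intro frac_le) auto
  have "t^2 \<le> b^2"
    using t by (intro power_mono) auto
  then have 3: "9 / (32 * b^2) \<le> 9 / (32 * t^2)"
    using t by (intro frac_le) auto
  have "(1 - t)^4 \<le> (1 - a)^4"
    using t by (intro power_mono) auto
  then have 4: "1 / (3 * (1 - a)^4) \<le> 1 / (3 * (1 - t)^4)"
    using t by (intro frac_le) auto
  show ?thesis
    using 1 2 3 4 cert unfolding alpha0_eq by linarith
qed

lemma poles_at_one_mono:
  assumes t: "0 \<le> a" "a \<le> t" "t < 1"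
  shows "1 / (3 * (1 - a)^4) - 2.44949 / (8 * (1 - a))
           \<le> 1 / (3 * (1 - t)^4) - sqrt 2 * sqrt 3 / (8 * (1 - t))"
proof -
  \<comment> \<open>The pole terms equal \<open>1/(1-t) * (1/(3(1-t)^3) - sqrt 6/8)\<close>, a product of two
    increasing nonnegative factors.\<close>
  have pole_factor: "1 / (3 * y^4) - s / (8 * y) = 1 / y * (1 / (3 * y^3) - s / 8)"
    if "y \<noteq> 0" for y s :: real
    using that by (simp add: field_simps eval_nat_numeral)
  have "(1 - t)^3 \<le> (1 - a)^3"
    using t by (intro power_mono) auto
  then have "1 / (3 * (1 - a)^3) \<le> 1 / (3 * (1 - t)^3)"
    using t by (intro frac_le) auto
  then have "1 / (3 * (1 - a)^3) - 2.44949 / 8 \<le> 1 / (3 * (1 - t)^3) - sqrt 2 * sqrt 3 / 8"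
    using sqrt6_le by simp
  moreover have "0 \<le> 1 / (3 * (1 - a)^3) - 2.44949 / 8"
    using t power_le_one[of "1 - a" 3] by (simp add: field_simps)
  moreover have "1 / (1 - a) \<le> 1 / (1 - t)"
    using t by (intro frac_le) auto
  ultimately have "1 / (1 - a) * (1 / (3 * (1 - a)^3) - 2.44949 / 8)
      \<le> 1 / (1 - t) * (1 / (3 * (1 - t)^3) - sqrt 2 * sqrt 3 / 8)"
    using t by (intro mult_mono) auto
  moreover have ne: "1 - a \<noteq> 0" "1 - t \<noteq> 0"
    using t by auto
  ultimately show ?thesis
    by (simp only: pole_factor[OF ne(1)] pole_factor[OF ne(2)])
qed

lemma numer11_pos_on_interval:
  assumes t: "0 \<le> a" "a \<le> t" "t \<le> b" "0 < t" "t < 1"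
    and l: "0 < l" "l^2 \<le> q a" and h: "0 < h" "q b \<le> h^2"
    and cert: "0 < - 9 * ((3*b + 1) * (b + 3)) / l^6 + 2 * 1.73205 / (h^3 * (1 - a)) - 9/32 * b
                   + 9/8 * 1.414213 * (a^2 + 6*a + 1) / h^3
                   + 1 / (3 * (1 - a)^4) - 2.44949 / (8 * (1 - a))"
  shows "0 < numer11 t"
proof -
  have lt: "l \<le> sqrt_q t" and ht: "sqrt_q t \<le> h"
    using sqrt_q_ge sqrt_q_le t l h by auto
  have "(3*t + 1) * (t + 3) \<le> (3*b + 1) * (b + 3)"
    using t by (intro mult_mono) auto
  then have 1: "9 * ((3*t + 1) * (t + 3)) / sqrt_q t ^ 6 \<le> 9 * ((3*b + 1) * (b + 3)) / l^6"
    using t l lt by (intro frac_le power_mono) auto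
  have "sqrt_q t ^ 3 * (1 - t) \<le> h^3 * (1 - a)"
    using t ht sqrt_q_pos[of t] by (intro mult_mono power_mono) auto
  then have 2: "2 * 1.73205 / (h^3 * (1 - a)) \<le> 2 * sqrt 3 / (sqrt_q t ^ 3 * (1 - t))"
    using t sqrt3_ge sqrt_q_pos[of t] by (intro frac_le) auto
  have "a^2 \<le> t^2"
    using t by (intro power_mono) auto
  then have "a^2 + 6*a + 1 \<le> t^2 + 6*t + 1"
    using t by linarith
  then have "9/8 * 1.414213 * (a^2 + 6*a + 1) \<le> 9/8 * sqrt 2 * (t^2 + 6*t + 1)"
    using sqrt2_ge t by (intro mult_mono) auto
  then have 3: "9/8 * 1.414213 * (a^2 + 6*a + 1) / h^3 \<le> 9/8 * sqrt 2 * (t^2 + 6*t + 1) / sqrt_q t ^ 3"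
    using t h ht sqrt_q_pos[of t] by (intro frac_le power_mono) auto
  have 4: "1 / (3 * (1 - a)^4) - 2.44949 / (8 * (1 - a))
      \<le> 1 / (3 * (1 - t)^4) - sqrt 2 * sqrt 3 / (8 * (1 - t))"
    using poles_at_one_mono t by simp
  show ?thesis
    using 1 2 3 4 t cert unfolding numer11_eq[OF t(4,5)] by linarith
qed

lemma cubic_over_q_cube_enclosure:
  assumes "0 \<le> a" "a \<le> t" "t \<le> b"
  shows "a * (a + 3)^2 / q b ^ 3 \<le> t * (t + 3)^2 / q t ^ 3"
    and "t * (t + 3)^2 / q t ^ 3 \<le> b * (b + 3)^2 / q a ^ 3"
proof -
  have "a * (a + 3)^2 \<le> t * (t + 3)^2" "t * (t + 3)^2 \<le> b * (b + 3)^2"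
    using assms by (intro mult_mono power_mono; simp)+
  moreover have "q a ^ 3 \<le> q t ^ 3" "q t ^ 3 \<le> q b ^ 3"
    using assms q_pos by (intro power_mono q_mono; simp add: less_imp_le)+
  ultimately show "a * (a + 3)^2 / q b ^ 3 \<le> t * (t + 3)^2 / q t ^ 3"
    and "t * (t + 3)^2 / q t ^ 3 \<le> b * (b + 3)^2 / q a ^ 3"
    using assms q_pos by (intro frac_le; simp)+
qed

definition numer12_rat_upper :: "real \<Rightarrow> real \<Rightarrow> real" where
  "numer12_rat_upper a b = 4 * b / (1 - b)^4 - 3/2 * 2.449489 * a / (1 - a)^2
     + (27/8 - 3/2 * 2.449489 / (1 - a)^2) / b^2 + 108 * (b * (b + 3)^2 / q a ^ 3)"

definition numer12_irr_upper :: "real \<Rightarrow> real \<Rightarrow> real \<Rightarrow> real \<Rightarrow> real" where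
  "numer12_irr_upper a b l h = - 27/2 * 1.414213 * (a + 3) / (h^3 * b^2)
     + 24 * 1.732051 * (b * (b + 3)) / (l^3 * (1 - b)^2) - 27/2 * 1.414213 * (a * (a + 3)) / h^3"

definition numer12_rat_lower :: "real \<Rightarrow> real \<Rightarrow> real" where
  "numer12_rat_lower a b = 4 * a / (1 - a)^4 - 3/2 * 2.44949 * (b / (1 - b)^2)
     - 3/2 * 2.44949 / (a^2 * (1 - b)^2) + 27 / (8 * b^2) + 108 * (a * (a + 3)^2 / q b ^ 3)"

definition numer12_irr_lower :: "real \<Rightarrow> real \<Rightarrow> real \<Rightarrow> real \<Rightarrow> real" where
  "numer12_irr_lower a b l h = - 27/2 * 1.414214 * (b + 3) / (l^3 * a^2)
     + 24 * 1.73205 * (a * (a + 3)) / (h^3 * (1 - a)^2) - 27/2 * 1.414214 * (b * (b + 3)) / l^3"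

lemma numer12_rat_le_upper:
  assumes t: "0 \<le> a" "a \<le> t" "t \<le> b" "0 < t" "b < 1"
  shows "numer12_rat t \<le> numer12_rat_upper a b"
proof -
  have "(1 - b)^4 \<le> (1 - t)^4"
    using t by (intro power_mono) auto
  then have 1: "4 * t / (1 - t)^4 \<le> 4 * b / (1 - b)^4"
    using t by (intro frac_le) auto
  have ta: "(1 - t)^2 \<le> (1 - a)^2"
    using t by (intro power_mono) auto
  then have "2.449489 * (a / (1 - a)^2) \<le> (sqrt 2 * sqrt 3) * (t / (1 - t)^2)"
    using t sqrt6_ge by (intro mult_mono frac_le) auto
  then have 2: "- 3/2 * (sqrt 2 * sqrt 3) * (t / (1 - t)^2) \<le> - 3/2 * 2.449489 * a / (1 - a)^2"
    by simp
  \<comment> \<open>The two poles at \<open>t = 0\<close> combine to \<open>N(t)/t^2\<close> with \<open>N(t) = 27/8 - 3/2 sqrt 6/(1-t)^2 < 0\<close>.\<close>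
  define N where "N = 27/8 - 3/2 * 2.449489 / (1 - a)^2"
  have "(1 - a)^2 \<le> 1"
    using t by (simp add: power_le_one)
  then have "N \<le> 0"
    using t unfolding N_def by (simp add: field_simps)
  have "2.449489 / (1 - a)^2 \<le> sqrt 2 * sqrt 3 / (1 - t)^2"
    using t sqrt6_ge ta by (intro frac_le) auto
  then have "(27/8 - 3/2 * (sqrt 2 * sqrt 3) / (1 - t)^2) / t^2 \<le> N / t^2"
    unfolding N_def by (intro divide_right_mono) auto
  also have "\<dots> \<le> N / b^2"
  proof -
    have "- N / b^2 \<le> - N / t^2"
      using \<open>N \<le> 0\<close> t power_mono[of t b 2] by (intro frac_le) auto
    then show ?thesis
      by simp
  qed
  also have "(27/8 - 3/2 * (sqrt 2 * sqrt 3) / (1 - t)^2) / t^2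
      = - 3/2 * (sqrt 2 * sqrt 3) / (t^2 * (1 - t)^2) + 27 / (8 * t^2)"
    using t by (simp add: field_simps)
  finally have 3: "- 3/2 * (sqrt 2 * sqrt 3) / (t^2 * (1 - t)^2) + 27 / (8 * t^2) \<le> N / b^2" .
  show ?thesis
    using 1 2 3 cubic_over_q_cube_enclosure(2)[of a t b] t
    unfolding numer12_rat_def numer12_rat_upper_def N_def by linarith
qed

lemma numer12_irr_le_upper:
  assumes t: "0 \<le> a" "a \<le> t" "t \<le> b" "0 < t" "b < 1"
    and l: "0 < l" "l^2 \<le> q a" and h: "0 < h" "q b \<le> h^2"
  shows "numer12_irr t \<le> numer12_irr_upper a b l h"
proof -
  have lt: "l \<le> sqrt_q t" and ht: "sqrt_q t \<le> h"
    using sqrt_q_ge sqrt_q_le t l h by auto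
  have u: "0 < sqrt_q t"
    by (rule sqrt_q_pos)
  have "27/2 * 1.414213 * (a + 3) \<le> 27/2 * sqrt 2 * (t + 3)"
    using sqrt2_ge t by (intro mult_mono) auto
  moreover have "sqrt_q t ^ 3 * t^2 \<le> h^3 * b^2"
    using ht u t by (intro mult_mono power_mono) auto
  ultimately have 1: "27/2 * 1.414213 * (a + 3) / (h^3 * b^2)
      \<le> 27/2 * sqrt 2 * (t + 3) / (sqrt_q t ^ 3 * t^2)"
    using u t by (intro frac_le) auto
  have "t * (t + 3) \<le> b * (b + 3)"
    using t by (intro mult_mono) auto
  then have "24 * sqrt 3 * (t * (t + 3)) \<le> 24 * 1.732051 * (b * (b + 3))"
    using sqrt3_le t by (intro mult_mono) auto
  moreover have "l^3 * (1 - b)^2 \<le> sqrt_q t ^ 3 * (1 - t)^2"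
    using lt l t by (intro mult_mono power_mono) auto
  ultimately have 2: "24 * sqrt 3 * (t * (t + 3)) / (sqrt_q t ^ 3 * (1 - t)^2)
      \<le> 24 * 1.732051 * (b * (b + 3)) / (l^3 * (1 - b)^2)"
    using t l by (intro frac_le) auto
  have "a * (a + 3) \<le> t * (t + 3)"
    using t by (intro mult_mono) auto
  then have "27/2 * 1.414213 * (a * (a + 3)) \<le> 27/2 * sqrt 2 * (t * (t + 3))"
    using sqrt2_ge t by (intro mult_mono) auto
  then have 3: "27/2 * 1.414213 * (a * (a + 3)) / h^3 \<le> 27/2 * sqrt 2 * (t * (t + 3)) / sqrt_q t ^ 3"
    using u ht t by (intro frac_le power_mono) auto
  show ?thesis
    using 1 2 3 unfolding numer12_irr_def numer12_irr_upper_def by linarith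
qed

lemma numer12_rat_ge_lower:
  assumes t: "0 < a" "a \<le> t" "t \<le> b" "b < 1"
  shows "numer12_rat_lower a b \<le> numer12_rat t"
proof -
  have x: "(1 - t)^4 \<le> (1 - a)^4" "(1 - b)^2 \<le> (1 - t)^2"
    using t by (intro power_mono; simp)+
  have tt: "t^2 \<le> b^2" "a^2 \<le> t^2"
    using t by (intro power_mono; simp)+
  have 1: "4 * a / (1 - a)^4 \<le> 4 * t / (1 - t)^4"
    using t x by (intro frac_le) auto
  have 2: "3/2 * (sqrt 2 * sqrt 3) * (t / (1 - t)^2) \<le> 3/2 * 2.44949 * (b / (1 - b)^2)"
    using t sqrt6_le x by (intro mult_mono frac_le) auto
  have "a^2 * (1 - b)^2 \<le> t^2 * (1 - t)^2"
    using tt x t by (intro mult_mono) auto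
  then have 3: "3/2 * (sqrt 2 * sqrt 3) / (t^2 * (1 - t)^2) \<le> 3/2 * 2.44949 / (a^2 * (1 - b)^2)"
    using t sqrt6_le by (intro frac_le) auto
  have 4: "27 / (8 * b^2) \<le> 27 / (8 * t^2)"
    using tt t by (intro frac_le) auto
  show ?thesis
    using 1 2 3 4 cubic_over_q_cube_enclosure(1)[of a t b] t
    unfolding numer12_rat_def numer12_rat_lower_def by linarith
qed

lemma numer12_irr_ge_lower:
  assumes t: "0 < a" "a \<le> t" "t \<le> b" "t < 1"
    and l: "0 < l" "l^2 \<le> q a" and h: "0 < h" "q b \<le> h^2"
  shows "numer12_irr_lower a b l h \<le> numer12_irr t"
proof -
  have lt: "l \<le> sqrt_q t" and ht: "sqrt_q t \<le> h"
    using sqrt_q_ge sqrt_q_le t l h by auto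
  have u: "0 < sqrt_q t"
    by (rule sqrt_q_pos)
  have "27/2 * sqrt 2 * (t + 3) \<le> 27/2 * 1.414214 * (b + 3)"
    using sqrt2_le t by (intro mult_mono) auto
  moreover have "l^3 * a^2 \<le> sqrt_q t ^ 3 * t^2"
    using lt l t by (intro mult_mono power_mono) auto
  ultimately have 1: "27/2 * sqrt 2 * (t + 3) / (sqrt_q t ^ 3 * t^2)
      \<le> 27/2 * 1.414214 * (b + 3) / (l^3 * a^2)"
    using t l by (intro frac_le) auto
  have "a * (a + 3) \<le> t * (t + 3)"
    using t by (intro mult_mono) auto
  then have "24 * 1.73205 * (a * (a + 3)) \<le> 24 * sqrt 3 * (t * (t + 3))"
    using sqrt3_ge t by (intro mult_mono) auto
  moreover have "sqrt_q t ^ 3 * (1 - t)^2 \<le> h^3 * (1 - a)^2"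
    using ht u t by (intro mult_mono power_mono) auto
  ultimately have 2: "24 * 1.73205 * (a * (a + 3)) / (h^3 * (1 - a)^2)
      \<le> 24 * sqrt 3 * (t * (t + 3)) / (sqrt_q t ^ 3 * (1 - t)^2)"
    using t u by (intro frac_le) auto
  have "t * (t + 3) \<le> b * (b + 3)"
    using t by (intro mult_mono) auto
  then have "27/2 * sqrt 2 * (t * (t + 3)) \<le> 27/2 * 1.414214 * (b * (b + 3))"
    using sqrt2_le t by (intro mult_mono) auto
  then have 3: "27/2 * sqrt 2 * (t * (t + 3)) / sqrt_q t ^ 3 \<le> 27/2 * 1.414214 * (b * (b + 3)) / l^3"
    using lt l t by (intro frac_le power_mono) auto
  show ?thesis
    using 1 2 3 unfolding numer12_irr_def numer12_irr_lower_def by linarith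
qed

lemma numer12_rat_ge_near_one:
  assumes t: "0 < a" "a \<le> t" "t < 1"
    and cert: "0 \<le> 4 * a / (1 - a)^2 - 3/2 * 2.44949 * (1 + 1 / a^2)"
  shows "(4 * a / (1 - a)^2 - 3/2 * 2.44949 * (1 + 1 / a^2)) / (1 - a)^2 + 27/8
           + 108 * (a * (a + 3)^2 / q 1 ^ 3) \<le> numer12_rat t"
proof -
  have x: "(1 - t)^2 \<le> (1 - a)^2"
    using t by (intro power_mono) auto
  have tt: "t^2 \<le> 1" "a^2 \<le> t^2"
    using t by (auto intro: power_mono simp: power_le_one)
  \<comment> \<open>Grouping the three poles at \<open>t = 1\<close> over the common factor \<open>1/(1-t)^2\<close> gives a
    lower bound that stays finite up to \<open>t = 1\<close>.\<close>
  have "1 / t^2 \<le> 1 / a^2"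
    using tt t by (intro frac_le) auto
  then have "(sqrt 2 * sqrt 3) * (t + 1 / t^2) \<le> 2.44949 * (1 + 1 / a^2)"
    using sqrt6_le t by (intro mult_mono) auto
  moreover have "4 * a / (1 - a)^2 \<le> 4 * t / (1 - t)^2"
    using t x by (intro frac_le) auto
  ultimately have mono: "4 * a / (1 - a)^2 - 3/2 * 2.44949 * (1 + 1 / a^2)
      \<le> 4 * t / (1 - t)^2 - 3/2 * (sqrt 2 * sqrt 3) * (t + 1 / t^2)"
    by linarith
  moreover have "0 \<le> 4 * t / (1 - t)^2 - 3/2 * (sqrt 2 * sqrt 3) * (t + 1 / t^2)"
    using mono cert by linarith
  ultimately have "(4 * a / (1 - a)^2 - 3/2 * 2.44949 * (1 + 1 / a^2)) / (1 - a)^2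
      \<le> (4 * t / (1 - t)^2 - 3/2 * (sqrt 2 * sqrt 3) * (t + 1 / t^2)) / (1 - t)^2"
    using x t by (intro frac_le) auto
  also have "\<dots> = 4 * t / (1 - t)^4 - 3/2 * (sqrt 2 * sqrt 3) * (t / (1 - t)^2)
      - 3/2 * (sqrt 2 * sqrt 3) / (t^2 * (1 - t)^2)"
  proof -
    have "(4 * t / y^2 - 3/2 * w * (t + 1 / t^2)) / y^2
        = 4 * t / y^4 - 3/2 * w * (t / y^2) - 3/2 * w / (t^2 * y^2)" if "y \<noteq> 0" for y w :: real
      using that t by (simp add: field_simps eval_nat_numeral)
    then show ?thesis
      using t by simp
  qed
  finally have 1: "(4 * a / (1 - a)^2 - 3/2 * 2.44949 * (1 + 1 / a^2)) / (1 - a)^2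
      \<le> 4 * t / (1 - t)^4 - 3/2 * (sqrt 2 * sqrt 3) * (t / (1 - t)^2)
        - 3/2 * (sqrt 2 * sqrt 3) / (t^2 * (1 - t)^2)" .
  have 2: "27/8 \<le> 27 / (8 * t^2)"
    using tt t by (simp add: field_simps)
  show ?thesis
    using 1 2 cubic_over_q_cube_enclosure(1)[of a t 1] t unfolding numer12_rat_def by linarith
qed

lemma numer12_neg_on_interval:
  assumes "0 \<le> a" "a \<le> t" "t \<le> b" "0 < t" "b < 1"
    and "0 < l" "l^2 \<le> q a" "0 < h" "q b \<le> h^2"
    and "numer12_rat_upper a b + numer12_irr_upper a b l h < 0"
  shows "numer12 t < 0"
proof -
  have "t < 1"
    using assms by linarith
  then show ?thesis
    using numer12_split[of t] numer12_rat_le_upper[OF assms(1-5)] numer12_irr_le_upper[OF assms(1-9)]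
      assms(4,10) by linarith
qed

lemma numer12_pos_on_interval:
  assumes "0 < a" "a \<le> t" "t \<le> b" "b < 1"
    and "0 < l" "l^2 \<le> q a" "0 < h" "q b \<le> h^2"
    and "0 < numer12_rat_lower a b + numer12_irr_lower a b l h"
  shows "0 < numer12 t"
proof -
  have "0 < t" "t < 1"
    using assms by linarith+
  then show ?thesis
    using numer12_split[of t] numer12_rat_ge_lower[OF assms(1-4)] numer12_irr_ge_lower[of a t b l h]
      assms by linarith
qed

lemma numer12_pos_near_one:
  assumes "0 < a" "a \<le> t" "t < 1"
    and "0 < l" "l^2 \<le> q a" "0 < h" "q 1 \<le> h^2"
    and "0 \<le> 4 * a / (1 - a)^2 - 3/2 * 2.44949 * (1 + 1 / a^2)"
    and "0 < (4 * a / (1 - a)^2 - 3/2 * 2.44949 * (1 + 1 / a^2)) / (1 - a)^2 + 27/8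
             + 108 * (a * (a + 3)^2 / q 1 ^ 3) + numer12_irr_lower a 1 l h"
  shows "0 < numer12 t"
  using numer12_split[of t] numer12_rat_ge_near_one[OF assms(1-3,8)] numer12_irr_ge_lower[of a t 1 l h]
    assms by linarith

section \<open>Positivity of \<open>numer11\<close> near 0\<close>

lemma small_powers_bounds:
  fixes t :: real
  assumes "0 \<le> t" "t \<le> 1/5"
  shows "0 \<le> t^2" "0 \<le> t^3" "0 \<le> t^4" "0 \<le> t^5" "0 \<le> t^6" "0 \<le> t^7" "0 \<le> t^8" "0 \<le> t^9"
    "t^2 \<le> 1/25" "t^3 \<le> 1/125" "t^4 \<le> 1/625" "t^5 \<le> 1/3125" "t^6 \<le> 1/15625"
    "t^7 \<le> 1/78125" "t^8 \<le> 1/390625" "t^9 \<le> 1/1953125"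
proof -
  have pow: "t^n \<le> (1/5)^n" for n
    using assms by (intro power_mono)
  show "t^2 \<le> 1/25" "t^3 \<le> 1/125" "t^4 \<le> 1/625" "t^5 \<le> 1/3125" "t^6 \<le> 1/15625"
    "t^7 \<le> 1/78125" "t^8 \<le> 1/390625" "t^9 \<le> 1/1953125"
    using pow[of 2] pow[of 3] pow[of 4] pow[of 5] pow[of 6] pow[of 7] pow[of 8] pow[of 9]
    by (simp_all add: power_divide)
qed (use assms in simp_all)

lemma inv_sqrt_q_pow6_le:
  assumes "0 \<le> t" "t \<le> 1/5"
  shows "1 / sqrt_q t ^ 6 \<le> (1 - t + t^2)^2 / 27"
proof -
  have "(1 - t + t^2)^2 * q t ^ 3 - 27
      = t^2 * (90 - 10*t + 155*t^2 - 12*t^3 + 155*t^4 - 10*t^5 + 90*t^6 + 27*t^8)"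
    unfolding q_def
    by (simp add: algebra_simps power2_eq_square power3_eq_cube power4_eq_xxxx eval_nat_numeral)
  moreover have "0 \<le> 90 - 10*t + 155*t^2 - 12*t^3 + 155*t^4 - 10*t^5 + 90*t^6 + 27*t^8"
    using small_powers_bounds[OF assms] assms by linarith
  ultimately have "0 \<le> (1 - t + t^2)^2 * q t ^ 3 - 27"
    by (metis mult_nonneg_nonneg zero_le_power2)
  then have "27 \<le> (1 - t + t^2)^2 * sqrt_q t ^ 6"
    unfolding q_cube by linarith
  then show ?thesis
    using sqrt_q_pos[of t] by (simp add: field_simps)
qed

lemma inv_sqrt_q_cube_ge:
  assumes "0 \<le> t" "t \<le> 1/5"
  shows "(1 - t - t^2) / (3 * sqrt 3) \<le> 1 / sqrt_q t ^ 3"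
proof -
  have "27 - (1 - t - t^2)^2 * q t ^ 3
      = t^2 * (18 + 118*t + 97*t^2 + 8*t^3 - 151*t^4 - 242*t^5 - 198*t^6 - 108*t^7 - 27*t^8)"
    unfolding q_def
    by (simp add: algebra_simps power2_eq_square power3_eq_cube power4_eq_xxxx eval_nat_numeral)
  moreover have "0 \<le> 18 + 118*t + 97*t^2 + 8*t^3 - 151*t^4 - 242*t^5 - 198*t^6 - 108*t^7 - 27*t^8"
    using small_powers_bounds[OF assms] assms by linarith
  ultimately have "0 \<le> 27 - (1 - t - t^2)^2 * q t ^ 3"
    by (metis mult_nonneg_nonneg zero_le_power2)
  then have "((1 - t - t^2) * sqrt_q t ^ 3)^2 \<le> (3 * sqrt 3)^2"
    unfolding q_cube by (simp add: power_mult_distrib flip: power_mult)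
  then have "(1 - t - t^2) * sqrt_q t ^ 3 \<le> 3 * sqrt 3"
    by (rule power2_le_imp_le) simp
  then show ?thesis
    using sqrt_q_pos[of t] by (simp add: field_simps)
qed

lemma inv_one_minus_le:
  fixes t :: real
  assumes "0 \<le> t" "t \<le> 1/5"
  shows "1 / (1 - t) \<le> (1 - t - t^2) * (t^2 + 6*t + 1)"
proof -
  have "(1 - t - t^2) * (t^2 + 6*t + 1) * (1 - t) - 1 = t * (4 - 11*t - t^2 + 6*t^3 + t^4)"
    by (simp add: algebra_simps power2_eq_square power3_eq_cube power4_eq_xxxx eval_nat_numeral)
  moreover have "0 \<le> 4 - 11*t - t^2 + 6*t^3 + t^4"
    using small_powers_bounds[OF assms] assms by linarith
  ultimately have "1 \<le> (1 - t - t^2) * (t^2 + 6*t + 1) * (1 - t)"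
    using assms(1) by (metis mult_nonneg_nonneg diff_ge_0_iff_ge)
  then show ?thesis
    using assms by (simp add: field_simps)
qed

text \<open>The three estimates above, applied to \<open>numer11_eq\<close>, give the following lower bound.\<close>

definition numer11_minorant :: "real \<Rightarrow> real" where
  "numer11_minorant t = - ((3*t + 1) * (t + 3) * (1 - t + t^2)^2) / 3 + 2/3 * ((1 - t - t^2) / (1 - t))
     + 2.449489 * ((1 - t - t^2) * (t^2 + 6*t + 1)) / 8 - 2.449489 / (8 * (1 - t))
     + 1 / (3 * (1 - t)^4) - 9/32 * t"

lemma numer11_ge_minorant:
  assumes t: "0 < t" "t \<le> 1/5"
  shows "numer11_minorant t \<le> numer11 t"
proof -
  define R where "R = (3*t + 1) * (t + 3)"
  define L where "L = 1 - t - t^2"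
  define P where "P = t^2 + 6*t + 1"
  have u: "0 < sqrt_q t"
    by (rule sqrt_q_pos)
  have "R * (1 / sqrt_q t ^ 6) \<le> R * ((1 - t + t^2)^2 / 27)"
    using inv_sqrt_q_pow6_le t unfolding R_def by (intro mult_left_mono) auto
  then have 1: "- (R * (1 - t + t^2)^2) / 3 \<le> - 9 * R / sqrt_q t ^ 6"
    by (simp add: mult.commute)
  have K: "0 \<le> 2 * sqrt 3 / (1 - t) + 9/8 * sqrt 2 * P"
    using t unfolding P_def by simp
  have "L / (3 * sqrt 3) * (2 * sqrt 3 / (1 - t) + 9/8 * sqrt 2 * P)
      \<le> 1 / sqrt_q t ^ 3 * (2 * sqrt 3 / (1 - t) + 9/8 * sqrt 2 * P)"
    using inv_sqrt_q_cube_ge[of t] t K unfolding L_def by (intro mult_right_mono) auto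
  moreover have "L / (3 * sqrt 3) * (2 * sqrt 3 / (1 - t) + 9/8 * sqrt 2 * P)
      = 2/3 * (L / (1 - t)) + (sqrt 2 * sqrt 3) * (L * P) / 8"
  proof -
    have "sqrt 3 * sqrt 3 = 3"
      by simp
    then show ?thesis
      using t by (simp add: field_simps)
  qed
  moreover have "1 / sqrt_q t ^ 3 * (2 * sqrt 3 / (1 - t) + 9/8 * sqrt 2 * P)
      = 2 * sqrt 3 / (sqrt_q t ^ 3 * (1 - t)) + 9/8 * sqrt 2 * P / sqrt_q t ^ 3"
    using t u by (simp add: field_simps)
  ultimately have 2: "2/3 * (L / (1 - t)) + (sqrt 2 * sqrt 3) * (L * P) / 8
      \<le> 2 * sqrt 3 / (sqrt_q t ^ 3 * (1 - t)) + 9/8 * sqrt 2 * P / sqrt_q t ^ 3"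
    by simp
  have "2.449489 * (L * P - 1 / (1 - t)) \<le> (sqrt 2 * sqrt 3) * (L * P - 1 / (1 - t))"
    using inv_one_minus_le[of t] t sqrt6_ge unfolding L_def P_def by (intro mult_right_mono) auto
  then have "2.449489 * (L * P - 1 / (1 - t)) / 8 \<le> (sqrt 2 * sqrt 3) * (L * P - 1 / (1 - t)) / 8"
    by (rule divide_right_mono) simp
  moreover have factor: "c * (L * P) / 8 - c / (8 * (1 - t)) = c * (L * P - 1 / (1 - t)) / 8" for c
    using t by (simp add: field_simps)
  ultimately have 3: "2.449489 * (L * P) / 8 - 2.449489 / (8 * (1 - t))
      \<le> (sqrt 2 * sqrt 3) * (L * P) / 8 - (sqrt 2 * sqrt 3) / (8 * (1 - t))"
    by (simp only: factor)
  have "t < 1"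
    using t by simp
  then show ?thesis
    using 1 2 3 unfolding numer11_eq[OF t(1) \<open>t < 1\<close>] numer11_minorant_def R_def L_def P_def by linarith
qed

lemma numer11_minorant_eq:
  assumes "t \<noteq> 1"
  shows "(1 - t)^4 * numer11_minorant t = t * (1886989/2000000 - 14014741/24000000*t
     - 57291863/6000000*t^2 + 229310731/6000000*t^3 - 1496886203/24000000*t^4 + 25949489/500000*t^5
     - 518045401/24000000*t^6 + 13550511/8000000*t^7 + 8/3*t^8 - t^9)"
proof -
  define x where "x = 1 - t"
  have "x \<noteq> 0"
    using assms unfolding x_def by simp
  then have "x^4 * numer11_minorant t
    = x^4 * (- ((3*t + 1) * (t + 3) * (1 - t + t^2)^2) / 3) + 2/3 * ((1 - t - t^2) * x^3)
      + 1/8 * (2.449489 * ((1 - t - t^2) * (t^2 + 6*t + 1))) * x^4 - 1/8 * 2.449489 * x^3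
      + 1/3 - 9/32 * t * x^4"
    unfolding numer11_minorant_def x_def[symmetric] by (simp add: field_simps eval_nat_numeral)
  also have "\<dots> = t * (1886989/2000000 - 14014741/24000000*t
     - 57291863/6000000*t^2 + 229310731/6000000*t^3 - 1496886203/24000000*t^4 + 25949489/500000*t^5
     - 518045401/24000000*t^6 + 13550511/8000000*t^7 + 8/3*t^8 - t^9)"
    unfolding x_def
    by (simp add: field_simps)
      (simp add: algebra_simps power2_eq_square power3_eq_cube power4_eq_xxxx eval_nat_numeral)
  finally show ?thesis
    unfolding x_def .
qed

lemma numer11_pos_near_zero:
  assumes t: "0 < t" "t \<le> 1/5"
  shows "0 < numer11 t"
proof -
  have "0 < 1886989/2000000 - 14014741/24000000*t
     - 57291863/6000000*t^2 + 229310731/6000000*t^3 - 1496886203/24000000*t^4 + 25949489/500000*t^5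
     - 518045401/24000000*t^6 + 13550511/8000000*t^7 + 8/3*t^8 - t^9" (is "0 < ?p")
    using small_powers_bounds[OF less_imp_le[OF t(1)] t(2)] t by linarith
  with t(1) have "0 < t * ?p"
    by (rule mult_pos_pos)
  also have "t * ?p = (1 - t)^4 * numer11_minorant t"
    using t by (intro numer11_minorant_eq[symmetric]) simp
  finally have "0 < numer11_minorant t"
    using t by (simp add: zero_less_mult_iff)
  then show ?thesis
    using numer11_ge_minorant[OF t] by linarith
qed

section \<open>Monotonicity of \<open>numer12\<close> on \<open>[1/2, 11/20]\<close>\<close>

definition numer12_rat_deriv :: "real \<Rightarrow> real" where
  "numer12_rat_deriv x = 4 * (1 / (1 - x)^4 + 4 * x / ((1 - x)^4 * (1 - x)))
     - 3/2 * ((sqrt 2 * sqrt 3) * (1 / (1 - x)^2 + 2 * x / ((1 - x)^2 * (1 - x))))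
     - 3/2 * ((sqrt 2 * sqrt 3) * (2 * (2 * x - 1) / ((x^2 * x) * ((1 - x)^2 * (1 - x)))))
     + 27/8 * (- 2 / (x^2 * x))
     + 108 * (((3 * x^2 + 12 * x + 9) * q x - 3 * (x * (x + 3)^2) * (6 * x + 2)) / (q x ^ 3 * q x))"

lemma numer12_rat_has_derivative:
  assumes "x \<noteq> 0" "x \<noteq> 1"
  shows "(numer12_rat has_real_derivative numer12_rat_deriv x) (at x)"
proof -
  have y: "1 - x \<noteq> 0"
    using assms by simp
  have d1: "((\<lambda>t. t / (1 - t)^4) has_real_derivative
      1 / (1 - x)^4 + 4 * x / ((1 - x)^4 * (1 - x))) (at x)"
    using y by (auto intro!: derivative_eq_intros simp: field_simps power_Suc[symmetric])
  have d2: "((\<lambda>t. t / (1 - t)^2) has_real_derivative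
      1 / (1 - x)^2 + 2 * x / ((1 - x)^2 * (1 - x))) (at x)"
    using y by (auto intro!: derivative_eq_intros simp: field_simps power_Suc[symmetric])
      (simp add: algebra_simps eval_nat_numeral)
  have d3: "((\<lambda>t. 1 / (t^2 * (1 - t)^2)) has_real_derivative
      2 * (2 * x - 1) / ((x^2 * x) * ((1 - x)^2 * (1 - x)))) (at x)"
    using y assms by (auto intro!: derivative_eq_intros simp: field_simps power_Suc[symmetric])
      (simp add: algebra_simps eval_nat_numeral)
  have d4: "((\<lambda>t. 1 / t^2) has_real_derivative - 2 / (x^2 * x)) (at x)"
    using assms by (auto intro!: derivative_eq_intros simp: field_simps power_Suc[symmetric])
  have d5: "((\<lambda>t. t * (t + 3)^2 / q t ^ 3) has_real_derivative
      ((3 * x^2 + 12 * x + 9) * q x - 3 * (x * (x + 3)^2) * (6 * x + 2)) / (q x ^ 3 * q x)) (at x)"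
    using q_nonzero[of x]
    by (auto intro!: derivative_eq_intros q_has_derivative simp: field_simps power_Suc[symmetric])
      (simp add: algebra_simps eval_nat_numeral)
  have rat: "numer12_rat = (\<lambda>t. 4 * (t / (1 - t)^4) - 3/2 * ((sqrt 2 * sqrt 3) * (t / (1 - t)^2))
      - 3/2 * ((sqrt 2 * sqrt 3) * (1 / (t^2 * (1 - t)^2))) + 27/8 * (1 / t^2)
      + 108 * (t * (t + 3)^2 / q t ^ 3))"
    unfolding numer12_rat_def by (auto simp: fun_eq_iff)
  show ?thesis
    unfolding rat numer12_rat_deriv_def by (intro DERIV_add DERIV_diff DERIV_cmult d1 d2 d3 d4 d5)
qed

lemma q_term_deriv_ge:
  assumes "1/2 \<le> x" "x \<le> 11/20"
  shows "- 7/64 \<le> ((3 * x^2 + 12 * x + 9) * q x - 3 * (x * (x + 3)^2) * (6 * x + 2)) / (q x ^ 3 * q x)"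
proof -
  have "(3 * x^2 + 12 * x + 9) * q x - 3 * (x * (x + 3)^2) * (6 * x + 2)
      = 27 - 9 * x^4 - 72 * x^3 - 138 * x^2"
    unfolding q_def
    by (simp add: algebra_simps power2_eq_square power3_eq_cube power4_eq_xxxx eval_nat_numeral)
  moreover have "x^2 \<le> (11/20)^2" "x^3 \<le> (11/20)^3" "x^4 \<le> (11/20)^4"
    using assms by (intro power_mono; simp)+
  ultimately have N: "- 28 \<le> (3 * x^2 + 12 * x + 9) * q x - 3 * (x * (x + 3)^2) * (6 * x + 2)"
    by (simp add: power_divide)
  have "4 \<le> q x"
    using q_mono[of "1/2" x] assms by (simp add: q_def power_divide)
  then have D: "4^3 * 4 \<le> q x ^ 3 * q x"
    by (intro mult_mono power_mono) auto
  then have "- 28 / (q x ^ 3 * q x) \<le>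
      ((3 * x^2 + 12 * x + 9) * q x - 3 * (x * (x + 3)^2) * (6 * x + 2)) / (q x ^ 3 * q x)"
    using N by (intro divide_right_mono) auto
  moreover have "28 / (q x ^ 3 * q x) \<le> 28 / (4^3 * 4)"
    using D by (intro frac_le) auto
  ultimately show ?thesis
    by simp
qed

lemma numer12_rat_deriv_term_bounds:
  fixes x :: real
  assumes x: "1/2 \<le> x" "x \<le> 11/20"
  shows "16 \<le> 1 / (1 - x)^4" "64 \<le> 4 * x / ((1 - x)^4 * (1 - x))" "- 16 \<le> - 2 / (x^2 * x)"
    and "1 / (1 - x)^2 + 2 * x / ((1 - x)^2 * (1 - x)) \<le> 18"
    and "2 * (2 * x - 1) / ((x^2 * x) * ((1 - x)^2 * (1 - x))) \<le> 18"
proof -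
  have y: "1 - x \<le> 1/2" "9/20 \<le> 1 - x"
    using x by auto
  have "(1 - x)^4 \<le> (1/2)^4"
    using y by (intro power_mono) auto
  then show "16 \<le> 1 / (1 - x)^4"
    using y by (simp add: field_simps)
  have "(1 - x)^4 * (1 - x) \<le> (1/2)^4 * (1/2)"
    using y by (intro mult_mono power_mono) auto
  then show "64 \<le> 4 * x / ((1 - x)^4 * (1 - x))"
    using x y by (simp add: field_simps)
  have "(1/2)^2 * (1/2) \<le> x^2 * x"
    using x by (intro mult_mono power_mono) auto
  then have "2 / (x^2 * x) \<le> 2 / ((1/2)^2 * (1/2))"
    using x by (intro frac_le) auto
  then show "- 16 \<le> - 2 / (x^2 * x)"
    by (simp add: power_divide)
  have "(9/20)^2 \<le> (1 - x)^2" "(9/20)^2 * (9/20) \<le> (1 - x)^2 * (1 - x)"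
    using y by (intro mult_mono power_mono; simp)+
  then have "1 / (1 - x)^2 \<le> 1 / (9/20)^2"
    and "2 * x / ((1 - x)^2 * (1 - x)) \<le> 2 * (11/20) / ((9/20)^2 * (9/20))"
    using x y by (intro frac_le; simp)+
  then show "1 / (1 - x)^2 + 2 * x / ((1 - x)^2 * (1 - x)) \<le> 18"
    by (simp add: power_divide)
  have "((1/2)^2 * (1/2)) * ((9/20)^2 * (9/20)) \<le> (x^2 * x) * ((1 - x)^2 * (1 - x))"
    using x y by (intro mult_mono power_mono) auto
  then have "2 * (2 * x - 1) / ((x^2 * x) * ((1 - x)^2 * (1 - x)))
      \<le> 2 * (1/10) / (((1/2)^2 * (1/2)) * ((9/20)^2 * (9/20)))"
    using x y by (intro frac_le) auto
  moreover have "2 * (1/10) / (((1/2)^2 * (1/2)) * ((9/20)^2 * (9/20))) \<le> (18::real)"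
    by (simp add: power_divide)
  ultimately show "2 * (2 * x - 1) / ((x^2 * x) * ((1 - x)^2 * (1 - x))) \<le> 18"
    by linarith
qed

lemma numer12_rat_deriv_pos:
  assumes x: "1/2 \<le> x" "x \<le> 11/20"
  shows "0 < numer12_rat_deriv x"
proof -
  have "0 \<le> 1 / (1 - x)^2 + 2 * x / ((1 - x)^2 * (1 - x))"
    and "0 \<le> 2 * (2 * x - 1) / ((x^2 * x) * ((1 - x)^2 * (1 - x)))"
    using x by simp_all
  moreover have "sqrt 2 * sqrt 3 \<le> 5/2"
    using sqrt6_le by simp
  ultimately have "(sqrt 2 * sqrt 3) * (1 / (1 - x)^2 + 2 * x / ((1 - x)^2 * (1 - x))) \<le> 5/2 * 18"
    and "(sqrt 2 * sqrt 3) * (2 * (2 * x - 1) / ((x^2 * x) * ((1 - x)^2 * (1 - x)))) \<le> 5/2 * 18"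
    using numer12_rat_deriv_term_bounds[OF x] by (intro mult_mono; simp)+
  moreover have "0 < 4 * (a + b) - 3/2 * e - 3/2 * f + 27/8 * c + 108 * d"
    if "16 \<le> a" "64 \<le> b" "e \<le> 5/2 * 18" "f \<le> 5/2 * 18" "- 16 \<le> c" "- 7/64 \<le> d"
    for a b c d e f :: real
    using that unfolding distrib_left by linarith
  ultimately show ?thesis
    using numer12_rat_deriv_term_bounds(1-3)[OF x] q_term_deriv_ge[OF x]
    unfolding numer12_rat_deriv_def by blast
qed

lemma numer12_rat_strict_mono:
  assumes "1/2 \<le> t" "t < s" "s \<le> 11/20"
  shows "numer12_rat t < numer12_rat s"
proof (rule DERIV_pos_imp_increasing[OF assms(2)])
  fix x assume "t \<le> x" "x \<le> s"
  then show "\<exists>y. (numer12_rat has_real_derivative y) (at x) \<and> 0 < y"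
    using numer12_rat_has_derivative[of x] numer12_rat_deriv_pos[of x] assms by auto
qed

lemma pole_over_sqrt_q_cube_antimono:
  assumes "0 < t" "t \<le> s"
  shows "(s + 3) / (s^2 * sqrt_q s ^ 3) \<le> (t + 3) / (t^2 * sqrt_q t ^ 3)"
proof -
  have "1 / s \<le> 1 / t" "3 / s^2 \<le> 3 / t^2"
    using assms by (intro frac_le power_mono; simp)+
  then have "(s + 3) / s^2 \<le> (t + 3) / t^2"
    using assms by (simp add: add_divide_distrib power2_eq_square)
  moreover have "1 / sqrt_q s ^ 3 \<le> 1 / sqrt_q t ^ 3"
    using sqrt_q_mono[of t s] sqrt_q_pos[of t] assms by (intro frac_le power_mono) auto
  ultimately have "(s + 3) / s^2 * (1 / sqrt_q s ^ 3) \<le> (t + 3) / t^2 * (1 / sqrt_q t ^ 3)"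
    using assms sqrt_q_pos[of s] by (intro mult_mono) auto
  then show ?thesis
    by simp
qed

lemma quadratic_over_sqrt_q_cube_mono:
  assumes "0 \<le> t" "t \<le> s" "s \<le> 2/3"
  shows "t * (t + 3) / sqrt_q t ^ 3 \<le> s * (s + 3) / sqrt_q s ^ 3"
proof -
  \<comment> \<open>Compare squares, which are rational functions of \<open>t\<close>.\<close>
  let ?f = "\<lambda>t. (t * (t + 3))^2 / q t ^ 3"
  have "?f t \<le> ?f s"
  proof (rule DERIV_nonneg_imp_nondecreasing[OF assms(2)])
    fix x assume x: "t \<le> x" "x \<le> s"
    have "(?f has_real_derivative (x * (x + 3)) * (18 + 6 * x - 34 * x^2 - 6 * x^3) / (q x ^ 3 * q x))
        (at x)"
      using q_nonzero[of x]
      by (auto intro!: derivative_eq_intros q_has_derivative simp: field_simps power_Suc[symmetric])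
        (simp add: q_def algebra_simps eval_nat_numeral)
    moreover have "x^2 \<le> (2/3)^2" "x^3 \<le> (2/3)^3"
      using x assms by (intro power_mono; simp)+
    then have "0 \<le> 18 + 6 * x - 34 * x^2 - 6 * x^3"
      using x assms by (simp add: power_divide)
    then have "0 \<le> (x * (x + 3)) * (18 + 6 * x - 34 * x^2 - 6 * x^3) / (q x ^ 3 * q x)"
      using x assms q_pos[of x] by simp
    ultimately show "\<exists>y. (?f has_real_derivative y) (at x) \<and> 0 \<le> y"
      by blast
  qed
  then have "(t * (t + 3) / sqrt_q t ^ 3)^2 \<le> (s * (s + 3) / sqrt_q s ^ 3)^2"
    unfolding q_cube by (simp add: power_divide power_mult[symmetric])
  moreover have "0 \<le> s * (s + 3) / sqrt_q s ^ 3"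
    using assms sqrt_q_pos[of s] by simp
  ultimately show ?thesis
    by (rule power2_le_imp_le)
qed

lemma numer12_irr_mono:
  assumes "0 < t" "t \<le> s" "s \<le> 2/3"
  shows "numer12_irr t \<le> numer12_irr s"
proof -
  define G where "G x = 24 * sqrt 3 / (1 - x)^2 - 27/2 * sqrt 2" for x
  have irr_split: "numer12_irr x = - 27/2 * sqrt 2 * ((x + 3) / (x^2 * sqrt_q x ^ 3))
      + x * (x + 3) / sqrt_q x ^ 3 * G x" if "x < 1" for x
  proof -
    have "sqrt_q x \<noteq> 0" "(1 - x)^2 \<noteq> 0"
      using sqrt_q_pos[of x] that by auto
    then show ?thesis
      unfolding numer12_irr_def G_def by (simp add: field_simps)
  qed
  have "(1 - s)^2 \<le> (1 - t)^2"
    using assms by (intro power_mono) auto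
  then have "G t \<le> G s"
    using assms unfolding G_def by (simp add: frac_le)
  moreover have "0 \<le> G t"
  proof -
    have "(1 - t)^2 \<le> 1"
      using assms by (simp add: power_le_one)
    then have "24 * sqrt 3 \<le> 24 * sqrt 3 / (1 - t)^2"
      using assms by (simp add: field_simps)
    moreover have "sqrt 2 \<le> sqrt 3" "0 \<le> sqrt 2"
      by simp_all
    ultimately show ?thesis
      unfolding G_def by linarith
  qed
  moreover have "0 \<le> s * (s + 3) / sqrt_q s ^ 3"
    using assms sqrt_q_pos[of s] by simp
  ultimately have "t * (t + 3) / sqrt_q t ^ 3 * G t \<le> s * (s + 3) / sqrt_q s ^ 3 * G s"
    using quadratic_over_sqrt_q_cube_mono[of t s] assms by (intro mult_mono) auto
  moreover have "27/2 * sqrt 2 * ((s + 3) / (s^2 * sqrt_q s ^ 3))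
      \<le> 27/2 * sqrt 2 * ((t + 3) / (t^2 * sqrt_q t ^ 3))"
    using pole_over_sqrt_q_cube_antimono[of t s] assms by (intro mult_left_mono) auto
  moreover have "t < 1" "s < 1"
    using assms by auto
  ultimately show ?thesis
    by (simp only: irr_split)
qed

lemma numer12_strict_mono:
  assumes "1/2 \<le> t" "t < s" "s \<le> 11/20"
  shows "numer12 t < numer12 s"
  using numer12_split[of t] numer12_split[of s] numer12_rat_strict_mono[OF assms]
    numer12_irr_mono[of t s] assms by auto

lemma continuous_on_numer12: "continuous_on {1/2..11/20} numer12"
proof -
  have "continuous_on S q" for S
    unfolding q_def[abs_def] by (intro continuous_intros)
  then have "continuous_on {1/2..11/20} (\<lambda>t. numer12_rat t + numer12_irr t)"
    unfolding numer12_rat_def numer12_irr_def sqrt_q_def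
    by (intro continuous_intros) (auto simp: q_nonzero)
  then show ?thesis
    by (rule continuous_on_cong[THEN iffD1, rotated 2]) (auto simp: numer12_split)
qed

lemma alpha1_neg:
  assumes "0 < t" "t < 1"
  shows "alpha1 t < 0"
proof -
  consider "t \<le> 1/4" | "1/4 \<le> t" "t \<le> 0.438" | "0.438 \<le> t" "t \<le> 0.578" | "0.578 \<le> t"
    by linarith
  then show ?thesis
  proof cases
    case 1
    show ?thesis
      by (rule alpha1_neg_on_interval[where a = 0 and b = "1/4" and l = "1.73205"])
        (use assms 1 in \<open>simp_all add: q_def power_divide\<close>)
  next
    case 2
    show ?thesis
      by (rule alpha1_neg_on_interval[where a = "1/4" and b = "0.438" and l = "1.92028"])
        (use assms 2 in \<open>simp_all add: q_def power_divide\<close>)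
  next
    case 3
    show ?thesis
      by (rule alpha1_neg_on_interval[where a = "0.438" and b = "0.578" and l = "2.10986"])
        (use assms 3 in \<open>simp_all add: q_def power_divide\<close>)
  next
    case 4
    show ?thesis
      by (rule alpha1_neg_on_interval[where a = "0.578" and b = 1 and l = "2.27117"])
        (use assms 4 in \<open>simp_all add: q_def power_divide\<close>)
  qed
qed

lemma alpha0_pos:
  assumes "0 < t" "t < 1"
  shows "0 < alpha0 t"
proof -
  consider "t \<le> 1/4" | "1/4 \<le> t" "t \<le> 0.438" | "0.438 \<le> t"
    by linarith
  then show ?thesis
  proof cases
    case 1
    show ?thesis
      by (rule alpha0_pos_on_interval[where a = 0 and b = "1/4" and l = "1.73205" and h = "1.92029"])
        (use assms 1 in \<open>simp_all add: q_def power_divide\<close>)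
  next
    case 2
    show ?thesis
      by (rule alpha0_pos_on_interval[where a = "1/4" and b = "0.438" and l = "1.92028" and h = "2.10987"])
        (use assms 2 in \<open>simp_all add: q_def power_divide\<close>)
  next
    case 3
    show ?thesis
      by (rule alpha0_pos_on_interval[where a = "0.438" and b = 1 and l = "2.10986" and h = "2.82843"])
        (use assms 3 in \<open>simp_all add: q_def power_divide\<close>)
  qed
qed

lemma numer11_pos:
  assumes "0 < t" "t < 1"
  shows "0 < numer11 t"
proof -
  consider "t \<le> 1/5" | "1/5 \<le> t" "t \<le> 3/10" | "3/10 \<le> t" "t \<le> 2/5" | "2/5 \<le> t"
    by linarith
  then show ?thesis
  proof cases
    case 1
    then show ?thesis
      using numer11_pos_near_zero assms by blast
  next
    case 2
    show ?thesis
      by (rule numer11_pos_on_interval[where a = "1/5" and b = "3/10" and l = "1.87616" and h = "1.96724"])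
        (use assms 2 in \<open>simp_all add: q_def power_divide\<close>)
  next
    case 3
    show ?thesis
      by (rule numer11_pos_on_interval[where a = "3/10" and b = "2/5" and l = "1.96723" and h = "2.06882"])
        (use assms 3 in \<open>simp_all add: q_def power_divide\<close>)
  next
    case 4
    show ?thesis
      by (rule numer11_pos_on_interval[where a = "2/5" and b = 1 and l = "2.06881" and h = "2.82843"])
        (use assms 4 in \<open>simp_all add: q_def power_divide\<close>)
  qed
qed

lemma numer12_neg:
  assumes "0 < t" "t \<le> 1/2"
  shows "numer12 t < 0"
proof -
  consider "t \<le> 1/4" | "1/4 \<le> t" "t \<le> 3/8" | "3/8 \<le> t" "t \<le> 0.438" | "0.438 \<le> t" "t \<le> 0.469"
    | "0.469 \<le> t"
    by linarith
  then show ?thesis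
  proof cases
    case 1
    show ?thesis
      by (rule numer12_neg_on_interval[where a = 0 and b = "1/4" and l = "1.73205" and h = "1.92029"])
        (use assms 1 in \<open>simp_all add: q_def power_divide numer12_rat_upper_def numer12_irr_upper_def\<close>)
  next
    case 2
    show ?thesis
      by (rule numer12_neg_on_interval[where a = "1/4" and b = "3/8" and l = "1.92028" and h = "2.04252"])
        (use assms 2 in \<open>simp_all add: q_def power_divide numer12_rat_upper_def numer12_irr_upper_def\<close>)
  next
    case 3
    show ?thesis
      by (rule numer12_neg_on_interval[where a = "3/8" and b = "0.438" and l = "2.04251" and h = "2.10987"])
        (use assms 3 in \<open>simp_all add: q_def power_divide numer12_rat_upper_def numer12_irr_upper_def\<close>)
  next
    case 4
    show ?thesis
      by (rule numer12_neg_on_interval[where a = "0.438" and b = "0.469" and l = "2.10986" and h = "2.14427"])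
        (use assms 4 in \<open>simp_all add: q_def power_divide numer12_rat_upper_def numer12_irr_upper_def\<close>)
  next
    case 5
    show ?thesis
      by (rule numer12_neg_on_interval[where a = "0.469" and b = "1/2" and l = "2.14426" and h = "2.17945"])
        (use assms 5 in \<open>simp_all add: q_def power_divide numer12_rat_upper_def numer12_irr_upper_def\<close>)
  qed
qed

lemma numer12_pos:
  assumes "11/20 \<le> t" "t < 1"
  shows "0 < numer12 t"
proof -
  consider "t \<le> 0.572" | "0.572 \<le> t" "t \<le> 0.594" | "0.594 \<le> t" "t \<le> 0.638" | "0.638 \<le> t" "t \<le> 0.725"
    | "0.725 \<le> t" "t \<le> 0.812" | "0.812 \<le> t" "t \<le> 0.9" | "0.9 \<le> t"
    by linarith
  then show ?thesis
  proof cases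
    case 1
    show ?thesis
      by (rule numer12_pos_on_interval[where a = "0.55" and b = "0.572" and l = "2.23774" and h = "2.26397"])
        (use assms 1 in \<open>simp_all add: q_def power_divide numer12_rat_lower_def numer12_irr_lower_def\<close>)
  next
    case 2
    show ?thesis
      by (rule numer12_pos_on_interval[where a = "0.572" and b = "0.594" and l = "2.26396" and h = "2.29053"])
        (use assms 2 in \<open>simp_all add: q_def power_divide numer12_rat_lower_def numer12_irr_lower_def\<close>)
  next
    case 3
    show ?thesis
      by (rule numer12_pos_on_interval[where a = "0.594" and b = "0.638" and l = "2.29052" and h = "2.3446"])
        (use assms 3 in \<open>simp_all add: q_def power_divide numer12_rat_lower_def numer12_irr_lower_def\<close>)
  next
    case 4
    show ?thesis
      by (rule numer12_pos_on_interval[where a = "0.638" and b = "0.725" and l = "2.34459" and h = "2.45497"])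
        (use assms 4 in \<open>simp_all add: q_def power_divide numer12_rat_lower_def numer12_irr_lower_def\<close>)
  next
    case 5
    show ?thesis
      by (rule numer12_pos_on_interval[where a = "0.725" and b = "0.812" and l = "2.45496" and h = "2.56945"])
        (use assms 5 in \<open>simp_all add: q_def power_divide numer12_rat_lower_def numer12_irr_lower_def\<close>)
  next
    case 6
    show ?thesis
      by (rule numer12_pos_on_interval[where a = "0.812" and b = "0.9" and l = "2.56944" and h = "2.68887"])
        (use assms 6 in \<open>simp_all add: q_def power_divide numer12_rat_lower_def numer12_irr_lower_def\<close>)
  next
    case 7
    show ?thesis
      by (rule numer12_pos_near_one[where a = "0.9" and l = "2.68886" and h = "2.82843"])
        (use assms 7 in \<open>simp_all add: q_def power_divide numer12_irr_lower_def\<close>)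
  qed
qed

lemma numer12_sign_change:
  "\<exists>\<delta>\<in>{1/2..11/20}. (\<forall>t\<in>{0<..<\<delta>}. numer12 t < 0) \<and> (\<forall>t\<in>{\<delta><..<1}. 0 < numer12 t)"
proof -
  obtain \<delta> where \<delta>: "1/2 \<le> \<delta>" "\<delta> \<le> 11/20" "numer12 \<delta> = 0"
    using IVT'[of numer12 "1/2" 0 "11/20"] continuous_on_numer12
      numer12_neg[of "1/2"] numer12_pos[of "11/20"] by force
  have "numer12 t < 0" if "0 < t" "t < \<delta>" for t
    using that \<delta> numer12_neg[of t] numer12_strict_mono[of t \<delta>] by (cases "t \<le> 1/2") auto
  moreover have "0 < numer12 t" if "\<delta> < t" "t < 1" for t
    using that \<delta> numer12_pos[of t] numer12_strict_mono[of \<delta> t] by (cases "11/20 \<le> t") auto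
  ultimately show ?thesis
    using \<delta>(1,2) by (intro bexI[of _ \<delta>]) auto
qed

lemma cfun_signs:
  assumes "0 < t" "t < 1"
  shows "0 < cfun t" "0 < T1_11 (cfun t) t"
    and "T1_12 (cfun t) t < 0 \<longleftrightarrow> numer12 t < 0" "0 < T1_12 (cfun t) t \<longleftrightarrow> 0 < numer12 t"
proof -
  have a: "0 < - alpha1 t" and ne: "alpha1 t \<noteq> 0"
    using alpha1_neg[OF assms] by simp_all
  then show "0 < cfun t"
    unfolding cfun_def using alpha0_pos[OF assms] by (simp add: divide_pos_neg)
  show "0 < T1_11 (cfun t) t"
    unfolding T1_11_cfun[OF ne] using a numer11_pos[OF assms] by (simp add: divide_pos_neg)
  show "T1_12 (cfun t) t < 0 \<longleftrightarrow> numer12 t < 0" "0 < T1_12 (cfun t) t \<longleftrightarrow> 0 < numer12 t"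
    unfolding T1_12_cfun[OF ne] using a
    by (simp_all add: divide_less_0_iff zero_less_divide_iff)
qed

theorem lemma4:
  shows "(\<forall>t\<in>{0<..<1}. \<forall>c. det (T1 c t) = alpha1 t * c + alpha0 t)
    \<and> (\<forall>t\<in>{0<..<1}. alpha1 t < 0)
    \<and> (\<forall>t\<in>{0<..<1}. alpha0 t > 0)
    \<and> (\<forall>t\<in>{0<..<1}. cfun t > 0)
    \<and> (\<forall>t\<in>{0<..<1}. T1_11 (cfun t) t > 0)
    \<and> (\<exists>\<delta><1. (\<forall>t\<in>{0<..<\<delta>}. T1_12 (cfun t) t < 0)
                \<and> (\<forall>t\<in>{\<delta><..<1}. T1_12 (cfun t) t > 0))"
proof -
  obtain \<delta> where \<delta>: "\<delta> \<in> {1/2..11/20}"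
    "\<forall>t\<in>{0<..<\<delta>}. numer12 t < 0" "\<forall>t\<in>{\<delta><..<1}. 0 < numer12 t"
    using numer12_sign_change by blast
  then have "\<delta> < 1" "\<forall>t\<in>{0<..<\<delta>}. T1_12 (cfun t) t < 0" "\<forall>t\<in>{\<delta><..<1}. T1_12 (cfun t) t > 0"
    using cfun_signs(3,4) by auto
  then show ?thesis
    using det_T1 alpha1_neg alpha0_pos cfun_signs(1,2) by auto
qed

end
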